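(* Assume $x_r$ is in the range of $S$. There exists an index $j$ such that $\frac{1}{y_j}|e_j^TSz_j|\ge\omega\|z_j\|$ for some global constant $\omega>0$ that only depends on $S$ and $n$.
   Context: Let $C\in\mathbb{R}^{n\times n}$ be symmetric with zero diagonal, $y\in\mathbb{R}^n$ a positive vector, and $S=C+\mathrm{diag}(y)$. Consider the Gauss-Seidel method on $\min_x x^TSx$, which cyclically minimizes over each coordinate: starting from $x_r=z_1$, for $i=1,\ldots,n$ the vector $z_{i+1}$ equals $z_i$ except in coordinate $i$, where $(z_{i+1})_i=-\frac{1}{y_i}\sum_{j}c_{ij}(z_i)_j$; then $x_{r+1}=z_{n+1}$. Here $e_j$ is the $j$-th standard basis vector and $\|\cdot\|$ the Euclidean norm. *)

theory Defs
  imports Main "HOL-Analysis.Analysis"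
begin

(* Vectors in R^n are functions nat => real, only entries at indices < n matter;
   n x n matrices are functions nat => nat => real, only entries at indices < n matter.
   Indices are 0-based: index i here corresponds to i+1 in the paper. *)

definition Smat :: "(nat \<Rightarrow> nat \<Rightarrow> real) \<Rightarrow> (nat \<Rightarrow> real) \<Rightarrow> nat \<Rightarrow> nat \<Rightarrow> real" where
  "Smat C y i j = C i j + (if i = j then y i else 0)"

definition mat_vec :: "nat \<Rightarrow> (nat \<Rightarrow> nat \<Rightarrow> real) \<Rightarrow> (nat \<Rightarrow> real) \<Rightarrow> nat \<Rightarrow> real" where
  "mat_vec n A v i = (\<Sum>k<n. A i k * v k)"

definition in_range :: "nat \<Rightarrow> (nat \<Rightarrow> nat \<Rightarrow> real) \<Rightarrow> (nat \<Rightarrow> real) \<Rightarrow> bool" where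
  "in_range n A x \<longleftrightarrow> (\<exists>w. \<forall>i<n. x i = mat_vec n A w i)"

definition vnorm :: "nat \<Rightarrow> (nat \<Rightarrow> real) \<Rightarrow> real" where
  "vnorm n v = sqrt (\<Sum>i<n. (v i)^2)"

(* Gauss-Seidel inner iterates: gs_z n C y x 0 = x_r (paper z_1),
   gs_z n C y x (Suc i) = z_i with coordinate i replaced by -(1/y_i) sum_j c_ij (z_i)_j
   (paper z_{i+2} from z_{i+1}). *)
fun gs_z :: "nat \<Rightarrow> (nat \<Rightarrow> nat \<Rightarrow> real) \<Rightarrow> (nat \<Rightarrow> real) \<Rightarrow> (nat \<Rightarrow> real) \<Rightarrow> nat \<Rightarrow> (nat \<Rightarrow> real)" where
  "gs_z n C y x 0 = x"
| "gs_z n C y x (Suc i) =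
     (gs_z n C y x i)(i := - (1 / y i) * (\<Sum>j<n. C i j * gs_z n C y x i j))"

end

theory Submission
  imports Defs
begin

text \<open>
  The Gauss-Seidel iterates z_j depend linearly and continuously on the start vector x_r.
  If every coordinate step met a vanishing residual, no coordinate would move, so x_r itself
  would lie in the kernel of S; for a symmetric S the kernel is orthogonal to the range, hence
  x_r = 0. Consequently the scaled residuals are jointly positive on the compact set of unit
  vectors orthogonal to the kernel, where they dominate a multiple of the norms of the
  iterates, and homogeneity carries this bound to the whole range. Some single index then
  satisfies the bound.
\<close>

lemma ex_le_of_sum_le:
  fixes f g :: "'a \<Rightarrow> real"
  assumes "finite A" "A \<noteq> {}" "sum f A \<le> sum g A"
  shows "\<exists>a\<in>A. f a \<le> g a"
proof (rule ccontr)
  assume "\<not> ?thesis"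
  then have "sum g A < sum f A"
    using assms(1,2) by (intro sum_strict_mono) auto
  with assms(3) show False by simp
qed

lemma compact_pos_ratio_bound:
  fixes F G :: "'a::topological_space \<Rightarrow> real"
  assumes "compact K" "continuous_on K F" "continuous_on K G" "\<forall>x\<in>K. F x > 0"
  obtains \<omega> where "\<omega> > 0" "\<forall>x\<in>K. \<omega> * G x \<le> F x"
proof (cases "K = {}")
  case True
  then show ?thesis using that[of 1] by simp
next
  case False
  obtain x0 where x0: "x0 \<in> K" "\<forall>x\<in>K. F x0 \<le> F x"
    using continuous_attains_inf[OF assms(1) False assms(2)] by blast
  have "bounded (G ` K)"
    using compact_continuous_image[OF assms(3,1)] by (rule compact_imp_bounded)
  then obtain M where M: "M > 0" "\<forall>x\<in>K. norm (G x) \<le> M"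
    by (auto simp: bounded_pos)
  have "F x0 / M * G x \<le> F x" if "x \<in> K" for x
  proof -
    have "F x0 / M * G x \<le> F x0 / M * M"
      using M that x0(1) assms(4) by (intro mult_left_mono) (auto intro: abs_le_D1)
    also have "\<dots> \<le> F x" using M x0(2) that by simp
    finally show ?thesis .
  qed
  then show ?thesis using that[of "F x0 / M"] M x0(1) assms(4) by auto
qed

lemma compact_truncated_unit_sphere:
  "compact {x::nat \<Rightarrow> real. (\<forall>i\<ge>n. x i = 0) \<and> (\<Sum>i<n. (x i)^2) = 1}"
proof -
  define Box :: "(nat \<Rightarrow> real) set"
    where "Box = PiE UNIV (\<lambda>i. if i < n then {-1..1} else {0})"
  have "compactin (product_topology (\<lambda>i. euclidean) UNIV) Box"
    unfolding Box_def compactin_PiE by auto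
  then have "compact Box"
    by (simp add: euclidean_product_topology)
  moreover have "closed {x::nat \<Rightarrow> real. (\<Sum>i<n. (x i)^2) = 1}"
    by (intro closed_Collect_eq continuous_intros
        continuous_on_subset[OF continuous_on_product_coordinates]) auto
  moreover have "{x. (\<forall>i\<ge>n. x i = 0) \<and> (\<Sum>i<n. (x i)^2) = 1}
      = Box \<inter> {x. (\<Sum>i<n. (x i)^2) = 1}"
  proof -
    have "\<bar>x i\<bar> \<le> 1" if "(\<Sum>i<n. (x i)^2) = 1" "i < n" for x :: "nat \<Rightarrow> real" and i
    proof -
      have "(x i)^2 \<le> 1"
        using that member_le_sum[of i "{..<n}" "\<lambda>i. (x i)^2"] by auto
      then show ?thesis by (simp add: abs_square_le_1)
    qed
    then show ?thesis unfolding Box_def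
      by (auto simp: PiE_iff abs_le_iff not_less) (metis empty_iff insert_iff not_le)
  qed
  ultimately show ?thesis by (simp add: compact_Int_closed)
qed

lemma range_orthogonal_kernel:
  assumes "\<forall>i<n. \<forall>j<n. A i j = A j i"
    and "in_range n A x"
    and "\<forall>i<n. mat_vec n A v i = 0"
  shows "(\<Sum>i<n. x i * v i) = 0"
proof -
  obtain w where w: "\<forall>i<n. x i = mat_vec n A w i"
    using assms(2) unfolding in_range_def by auto
  have "(\<Sum>i<n. x i * v i) = (\<Sum>i<n. \<Sum>k<n. A i k * w k * v i)"
    using w by (simp add: mat_vec_def sum_distrib_right)
  also have "\<dots> = (\<Sum>k<n. \<Sum>i<n. A i k * w k * v i)" by (rule sum.swap)
  also have "\<dots> = (\<Sum>k<n. w k * mat_vec n A v k)"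
    unfolding mat_vec_def sum_distrib_left
    by (intro sum.cong refl) (simp add: assms(1) mult_ac)
  also have "\<dots> = 0" using assms(3) by simp
  finally show ?thesis .
qed

lemma symmetric_Smat:
  assumes "\<forall>i<n. \<forall>j<n. C i j = C j i"
  shows "\<forall>i<n. \<forall>j<n. Smat C y i j = Smat C y j i"
  using assms unfolding Smat_def by auto

lemma range_vector_normalize:
  assumes "\<forall>i<n. \<forall>j<n. A i j = A j i" "in_range n A x" "vnorm n x \<noteq> 0"
  obtains r x' where "r > 0" "\<forall>i<n. x i = r * x' i"
    "\<forall>i\<ge>n. x' i = 0" "(\<Sum>i<n. (x' i)^2) = 1"
    "\<forall>v. (\<forall>i<n. mat_vec n A v i = 0) \<longrightarrow> (\<Sum>i<n. x' i * v i) = 0"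
proof
  define r where "r = vnorm n x"
  have "r \<ge> 0" unfolding r_def vnorm_def by (simp add: sum_nonneg)
  with assms(3) show r: "r > 0" unfolding r_def by simp
  define x' where "x' i = (if i < n then x i / r else 0)" for i
  show "\<forall>i<n. x i = r * x' i" "\<forall>i\<ge>n. x' i = 0"
    using r unfolding x'_def by simp_all
  have "(\<Sum>i<n. (x' i)^2) = (\<Sum>i<n. (x i)^2) / r^2"
    unfolding x'_def by (simp add: sum_divide_distrib power_divide)
  also have "\<dots> = 1"
    using r unfolding r_def vnorm_def by (simp add: sum_nonneg)
  finally show "(\<Sum>i<n. (x' i)^2) = 1" .
  show "\<forall>v. (\<forall>i<n. mat_vec n A v i = 0) \<longrightarrow> (\<Sum>i<n. x' i * v i) = 0"
    using range_orthogonal_kernel[OF assms(1,2)] unfolding x'_def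
    by (simp add: sum_divide_distrib[symmetric])
qed

lemma mat_vec_scale:
  assumes "\<forall>i<n. a i = c * b i"
  shows "mat_vec n A a j = c * mat_vec n A b j"
  unfolding mat_vec_def sum_distrib_left using assms by (intro sum.cong) auto

lemma vnorm_scale:
  assumes "\<forall>i<n. a i = c * b i" "c \<ge> 0"
  shows "vnorm n a = c * vnorm n b"
proof -
  have "(\<Sum>i<n. (a i)^2) = c^2 * (\<Sum>i<n. (b i)^2)"
    using assms(1) by (simp add: sum_distrib_left power_mult_distrib)
  then show ?thesis unfolding vnorm_def using assms(2) by (simp add: real_sqrt_mult)
qed

lemma mat_vec_Smat:
  assumes "j < n"
  shows "mat_vec n (Smat C y) v j = (\<Sum>k<n. C j k * v k) + y j * v j"
proof -
  have "(\<Sum>k<n. (if j = k then y j else 0) * v k) = y j * v j"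
    using assms by (subst sum.cong[OF refl, of _ _ "\<lambda>k. if j = k then y j * v k else 0"]) auto
  then show ?thesis
    unfolding mat_vec_def Smat_def by (simp add: distrib_right sum.distrib)
qed

lemma continuous_on_gs_z: "continuous_on A (\<lambda>x. gs_z n C y x j i)"
proof (induction j arbitrary: i)
  case 0
  show ?case
    by (auto intro: continuous_on_subset[OF continuous_on_product_coordinates])
next
  case (Suc j)
  have "continuous_on A (\<lambda>x. - (1 / y j) * (\<Sum>k<n. C j k * gs_z n C y x j k))"
    using Suc by (intro continuous_intros) auto
  then show ?case using Suc by (cases "i = j") auto
qed

lemma gs_z_homogeneous:
  assumes "\<forall>i<n. x' i = c * x i"
  shows "\<forall>i<n. gs_z n C y x' j i = c * gs_z n C y x j i"
proof (induction j)
  case 0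
  then show ?case using assms by simp
next
  case (Suc j)
  have "(\<Sum>k<n. C j k * gs_z n C y x' j k) = c * (\<Sum>k<n. C j k * gs_z n C y x j k)"
    using Suc by (simp add: sum_distrib_left mult_ac)
  then show ?case using Suc by auto
qed

lemma gs_z_Suc_eq_self:
  assumes "j < n" "y j \<noteq> 0" "mat_vec n (Smat C y) (gs_z n C y x j) j = 0"
  shows "gs_z n C y x (Suc j) = gs_z n C y x j"
proof -
  have "- (1 / y j) * (\<Sum>k<n. C j k * gs_z n C y x j k) = gs_z n C y x j j"
    using assms mat_vec_Smat[OF assms(1), of C y "gs_z n C y x j"]
    by (simp add: field_simps)
  then show ?thesis by simp
qed

lemma gs_z_eq_self_if_residuals_zero:
  assumes "\<forall>i<n. y i \<noteq> 0" "\<forall>j<n. mat_vec n (Smat C y) (gs_z n C y x j) j = 0"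
  shows "j \<le> n \<Longrightarrow> gs_z n C y x j = x"
proof (induction j)
  case (Suc j)
  then have "j < n" and IH: "gs_z n C y x j = x" by auto
  then have "gs_z n C y x (Suc j) = gs_z n C y x j"
    using assms by (intro gs_z_Suc_eq_self) auto
  with IH show ?case by simp
qed simp

definition gs_residual_sum :: "nat \<Rightarrow> (nat \<Rightarrow> nat \<Rightarrow> real) \<Rightarrow> (nat \<Rightarrow> real) \<Rightarrow> (nat \<Rightarrow> real) \<Rightarrow> real"
  where "gs_residual_sum n C y x =
    (\<Sum>j<n. (1 / y j) * \<bar>mat_vec n (Smat C y) (gs_z n C y x j) j\<bar>)"

definition gs_norm_sum :: "nat \<Rightarrow> (nat \<Rightarrow> nat \<Rightarrow> real) \<Rightarrow> (nat \<Rightarrow> real) \<Rightarrow> (nat \<Rightarrow> real) \<Rightarrow> real"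
  where "gs_norm_sum n C y x = (\<Sum>j<n. vnorm n (gs_z n C y x j))"

lemma continuous_on_gs_residual_sum: "continuous_on A (gs_residual_sum n C y)"
  unfolding gs_residual_sum_def mat_vec_def
  by (intro continuous_intros continuous_on_gs_z)

lemma continuous_on_gs_norm_sum: "continuous_on A (gs_norm_sum n C y)"
  unfolding gs_norm_sum_def vnorm_def
  by (intro continuous_intros continuous_on_gs_z)

lemma gs_residual_sum_scale:
  assumes "\<forall>i<n. x' i = c * x i" "c \<ge> 0"
  shows "gs_residual_sum n C y x' = c * gs_residual_sum n C y x"
  unfolding gs_residual_sum_def sum_distrib_left
  using mat_vec_scale[OF gs_z_homogeneous[OF assms(1)]] assms(2)
  by (intro sum.cong) (auto simp: abs_mult)

lemma gs_norm_sum_scale: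
  assumes "\<forall>i<n. x' i = c * x i" "c \<ge> 0"
  shows "gs_norm_sum n C y x' = c * gs_norm_sum n C y x"
  unfolding gs_norm_sum_def sum_distrib_left
  using vnorm_scale[OF gs_z_homogeneous[OF assms(1)] assms(2)] by simp

lemma gs_residual_sum_nonneg:
  assumes "\<forall>i<n. y i > 0"
  shows "gs_residual_sum n C y x \<ge> 0"
  using assms unfolding gs_residual_sum_def by (intro sum_nonneg) auto

lemma gs_residual_sum_pos:
  assumes "\<forall>i<n. y i > 0"
    and orth: "\<forall>v. (\<forall>i<n. mat_vec n (Smat C y) v i = 0) \<longrightarrow> (\<Sum>i<n. x i * v i) = 0"
    and "(\<Sum>i<n. (x i)^2) \<noteq> 0"
  shows "gs_residual_sum n C y x > 0"
proof (rule ccontr)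
  define r where "r j = (1 / y j) * \<bar>mat_vec n (Smat C y) (gs_z n C y x j) j\<bar>" for j
  have nonneg: "\<And>j. j \<in> {..<n} \<Longrightarrow> 0 \<le> r j"
    using assms(1) unfolding r_def by auto
  assume "\<not> gs_residual_sum n C y x > 0"
  then have "sum r {..<n} = 0"
    using gs_residual_sum_nonneg[OF assms(1), of C x] unfolding gs_residual_sum_def r_def
    by linarith
  then have "\<forall>j<n. r j = 0"
    using sum_nonneg_eq_0_iff[of "{..<n}" r] nonneg by simp
  moreover have y_nonzero: "\<forall>i<n. y i \<noteq> 0"
    using assms(1) by (metis less_irrefl)
  ultimately have residuals: "\<forall>j<n. mat_vec n (Smat C y) (gs_z n C y x j) j = 0"
    unfolding r_def by simp
  have "gs_z n C y x j = x" if "j < n" for j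
    using gs_z_eq_self_if_residuals_zero[OF y_nonzero residuals] that by simp
  with residuals have "\<forall>j<n. mat_vec n (Smat C y) x j = 0" by metis
  then have "(\<Sum>i<n. x i * x i) = 0" using orth by blast
  with assms(3) show False by (simp add: power2_eq_square)
qed

lemma gs_norm_sum_le_residual_sum:
  assumes "\<forall>i<n. \<forall>j<n. C i j = C j i" "\<forall>i<n. y i > 0"
  obtains \<omega> where "\<omega> > 0"
    "\<forall>x. in_range n (Smat C y) x \<longrightarrow> \<omega> * gs_norm_sum n C y x \<le> gs_residual_sum n C y x"
proof -
  define K where "K = {v. \<forall>i<n. mat_vec n (Smat C y) v i = 0}"
  define B where "B = {x::nat \<Rightarrow> real. (\<forall>i\<ge>n. x i = 0) \<and> (\<Sum>i<n. (x i)^2) = 1}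
    \<inter> (\<Inter>v\<in>K. {x. (\<Sum>i<n. x i * v i) = 0})"
  have "closed (\<Inter>v\<in>K. {x::nat \<Rightarrow> real. (\<Sum>i<n. x i * v i) = 0})"
    by (intro closed_INT ballI closed_Collect_eq continuous_intros
        continuous_on_subset[OF continuous_on_product_coordinates]) auto
  then have "compact B"
    unfolding B_def by (intro compact_Int_closed compact_truncated_unit_sphere)
  moreover have "\<forall>x\<in>B. gs_residual_sum n C y x > 0"
    using gs_residual_sum_pos[OF assms(2)] unfolding B_def K_def by auto
  ultimately obtain \<omega> where \<omega>: "\<omega> > 0"
    "\<forall>x\<in>B. \<omega> * gs_norm_sum n C y x \<le> gs_residual_sum n C y x"
    using compact_pos_ratio_bound[OF _ continuous_on_gs_residual_sum continuous_on_gs_norm_sum]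
    by blast
  have "\<omega> * gs_norm_sum n C y x \<le> gs_residual_sum n C y x"
    if range: "in_range n (Smat C y) x" for x
  proof (cases "vnorm n x = 0")
    case True
    then have "\<forall>i<n. x i = 0 * x i"
      unfolding vnorm_def by (simp add: sum_nonneg_eq_0_iff)
    then have "gs_norm_sum n C y x = 0"
      using gs_norm_sum_scale[where c = 0 and x' = x] by simp
    then show ?thesis using gs_residual_sum_nonneg[OF assms(2)] by simp
  next
    case False
    then obtain r x' where r: "r > 0" and x_scale: "\<forall>i<n. x i = r * x' i"
      and x': "\<forall>i\<ge>n. x' i = 0" "(\<Sum>i<n. (x' i)^2) = 1"
        "\<forall>v. (\<forall>i<n. mat_vec n (Smat C y) v i = 0) \<longrightarrow> (\<Sum>i<n. x' i * v i) = 0"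
      using range_vector_normalize[OF symmetric_Smat[OF assms(1)] range] by blast
    then have "x' \<in> B" unfolding B_def K_def by blast
    then have "r * (\<omega> * gs_norm_sum n C y x') \<le> r * gs_residual_sum n C y x'"
      using \<omega>(2) r by simp
    then show ?thesis
      using gs_norm_sum_scale[OF x_scale] gs_residual_sum_scale[OF x_scale] r
      by (simp add: mult_ac)
  qed
  then show ?thesis using that \<omega>(1) by blast
qed

theorem lemma12:
  fixes n :: nat and C :: "nat \<Rightarrow> nat \<Rightarrow> real" and y :: "nat \<Rightarrow> real"
  assumes "n \<ge> 1"
    and "\<forall>i<n. \<forall>j<n. C i j = C j i"
    and "\<forall>i<n. C i i = 0"
    and "\<forall>i<n. y i > 0"
  shows "\<exists>\<omega>>0. \<forall>x. in_range n (Smat C y) x \<longrightarrow>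
           (\<exists>j<n. (1 / y j) * \<bar>mat_vec n (Smat C y) (gs_z n C y x j) j\<bar>
                    \<ge> \<omega> * vnorm n (gs_z n C y x j))"
proof -
  obtain \<omega> where \<omega>: "\<omega> > 0"
    "\<forall>x. in_range n (Smat C y) x \<longrightarrow> \<omega> * gs_norm_sum n C y x \<le> gs_residual_sum n C y x"
    using gs_norm_sum_le_residual_sum[OF assms(2,4)] by blast
  have "\<exists>j<n. \<omega> * vnorm n (gs_z n C y x j)
      \<le> (1 / y j) * \<bar>mat_vec n (Smat C y) (gs_z n C y x j) j\<bar>"
    if "in_range n (Smat C y) x" for x
  proof -
    have "(\<Sum>j<n. \<omega> * vnorm n (gs_z n C y x j))
        \<le> (\<Sum>j<n. (1 / y j) * \<bar>mat_vec n (Smat C y) (gs_z n C y x j) j\<bar>)"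
      using \<omega>(2) that unfolding gs_norm_sum_def gs_residual_sum_def sum_distrib_left by blast
    from ex_le_of_sum_le[OF finite_lessThan _ this] show ?thesis
      using assms(1) by (auto simp: lessThan_empty_iff)
  qed
  then show ?thesis using \<omega>(1) by blast
qed

end
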